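(* Let $\alpha,\beta,\gamma,\delta\in\mathbb{R}$ with $\alpha+\delta\neq 0$ and $\alpha\gamma-\beta\delta=0$, and let $G_6$ be the connected, simply connected Lie group whose Lie algebra $\mathfrak{g}_6$ has a basis $\{e_1,e_2,e_3\}$ with $[e_1,e_2]=\alpha e_2+\beta e_3$, $[e_1,e_3]=\gamma e_2+\delta e_3$, $[e_2,e_3]=0$, equipped with the left-invariant Lorentzian metric $g$ for which $\{e_1,e_2,e_3\}$ is pseudo-orthonormal with $e_3$ timelike, and with the product structure $J$. Let $\lambda_0,c\in\mathbb{R}$. Then there exists a derivation $D$ of $\mathfrak{g}_6$ with $\widetilde{\mathrm{Ric}}^1=(s^1\lambda_0+c)\mathrm{Id}+D$ (i.e. $(G_6,g,J)$ is an algebraic Schouten soliton associated to the Kobayashi–Nomizu connection $\nabla^1$) if and only if one of the following holds: (i) $\alpha=\beta=0$, $\delta\neq0$ and $c=0$; (ii) $\alpha\neq0$, $\beta=\gamma=0$, $\alpha+\delta\neq0$ and $c=-\alpha^2+2\alpha^2\lambda_0$.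
   Context: Pseudo-orthonormal means $g(e_1,e_1)=g(e_2,e_2)=1$, $g(e_3,e_3)=-1$, $g(e_i,e_j)=0$ for $i\neq j$; left-invariant tensors are identified with their values on $\mathfrak{g}$. $\nabla$ is the Levi-Civita connection of $g$. The product structure $J$ is the left-invariant endomorphism with $Je_1=e_1$, $Je_2=e_2$, $Je_3=-e_3$. The canonical connection is $\nabla^0_XY=\nabla_XY-\frac12(\nabla_XJ)JY$, and the Kobayashi–Nomizu connection is $\nabla^1_XY=\nabla^0_XY-\frac14[(\nabla_YJ)JX-(\nabla_{JY}J)X]$. For $k=0,1$: $R^k(X,Y)Z=\nabla^k_X\nabla^k_YZ-\nabla^k_Y\nabla^k_XZ-\nabla^k_{[X,Y]}Z$; $\rho^k(X,Y)=-g(R^k(X,e_1)Y,e_1)-g(R^k(X,e_2)Y,e_2)+g(R^k(X,e_3)Y,e_3)$; $\widetilde\rho^k(X,Y)=\frac12(\rho^k(X,Y)+\rho^k(Y,X))$; $\widetilde{\mathrm{Ric}}^k$ is defined by $\widetilde\rho^k(X,Y)=g(\widetilde{\mathrm{Ric}}^k(X),Y)$; and $s^k=\widetilde\rho^k(e_1,e_1)+\widetilde\rho^k(e_2,e_2)-\widetilde\rho^k(e_3,e_3)$. A derivation of $\mathfrak{g}$ is a linear map $D$ with $D[X,Y]=[DX,Y]+[X,DY]$. $(G,g,J)$ is an algebraic Schouten soliton associated to $\nabla^k$ (with real constants $\lambda_0,c$) if $\widetilde{\mathrm{Ric}}^k=(s^k\lambda_0+c)\mathrm{Id}+D$ for some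 derivation $D$. *)

theory Defs
  imports "HOL-Analysis.Analysis"
begin

text \<open>The Lie algebra g6 is modelled as real^3; e1, e2, e3 are the standard basis
vectors (coordinates 1, 2, 3). All definitions are parameterised by the structure
constants a b c d (alpha, beta, gamma, delta).\<close>

definition e1 :: "real^3" where "e1 = vector [1, 0, 0]"
definition e2 :: "real^3" where "e2 = vector [0, 1, 0]"
definition e3 :: "real^3" where "e3 = vector [0, 0, 1]"

text \<open>Lie bracket: [e1,e2] = a e2 + b e3, [e1,e3] = c e2 + d e3, [e2,e3] = 0, extended bilinearly.\<close>
definition lb :: "real \<Rightarrow> real \<Rightarrow> real \<Rightarrow> real \<Rightarrow> real^3 \<Rightarrow> real^3 \<Rightarrow> real^3" where
  "lb a b c d X Y =
     (X$1 * Y$2 - X$2 * Y$1) *\<^sub>R vector [0, a, b]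
   + (X$1 * Y$3 - X$3 * Y$1) *\<^sub>R vector [0, c, d]"

definition gm :: "real^3 \<Rightarrow> real^3 \<Rightarrow> real" where
  "gm X Y = X$1 * Y$1 + X$2 * Y$2 - X$3 * Y$3"

definition koszul :: "real \<Rightarrow> real \<Rightarrow> real \<Rightarrow> real \<Rightarrow> real^3 \<Rightarrow> real^3 \<Rightarrow> real^3 \<Rightarrow> real" where
  "koszul a b c d X Y Z =
     (1/2) * (gm (lb a b c d X Y) Z - gm (lb a b c d Y Z) X + gm (lb a b c d Z X) Y)"

text \<open>Levi-Civita connection: nabla_X Y = sum_k g(e_k,e_k) g(nabla_X Y, e_k) e_k.\<close>
definition LC :: "real \<Rightarrow> real \<Rightarrow> real \<Rightarrow> real \<Rightarrow> real^3 \<Rightarrow> real^3 \<Rightarrow> real^3" where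
  "LC a b c d X Y = vector [koszul a b c d X Y e1, koszul a b c d X Y e2, - koszul a b c d X Y e3]"

definition Jp :: "real^3 \<Rightarrow> real^3" where
  "Jp X = vector [X$1, X$2, - X$3]"

definition nablaJ :: "real \<Rightarrow> real \<Rightarrow> real \<Rightarrow> real \<Rightarrow> real^3 \<Rightarrow> real^3 \<Rightarrow> real^3" where
  "nablaJ a b c d X Y = LC a b c d X (Jp Y) - Jp (LC a b c d X Y)"

definition nabla0 :: "real \<Rightarrow> real \<Rightarrow> real \<Rightarrow> real \<Rightarrow> real^3 \<Rightarrow> real^3 \<Rightarrow> real^3" where
  "nabla0 a b c d X Y = LC a b c d X Y - (1/2) *\<^sub>R nablaJ a b c d X (Jp Y)"

definition nabla1 :: "real \<Rightarrow> real \<Rightarrow> real \<Rightarrow> real \<Rightarrow> real^3 \<Rightarrow> real^3 \<Rightarrow> real^3" where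
  "nabla1 a b c d X Y = nabla0 a b c d X Y
     - (1/4) *\<^sub>R (nablaJ a b c d Y (Jp X) - nablaJ a b c d (Jp Y) X)"

definition R1 :: "real \<Rightarrow> real \<Rightarrow> real \<Rightarrow> real \<Rightarrow> real^3 \<Rightarrow> real^3 \<Rightarrow> real^3 \<Rightarrow> real^3" where
  "R1 a b c d X Y Z = nabla1 a b c d X (nabla1 a b c d Y Z) - nabla1 a b c d Y (nabla1 a b c d X Z)
     - nabla1 a b c d (lb a b c d X Y) Z"

definition rho1 :: "real \<Rightarrow> real \<Rightarrow> real \<Rightarrow> real \<Rightarrow> real^3 \<Rightarrow> real^3 \<Rightarrow> real" where
  "rho1 a b c d X Y = - gm (R1 a b c d X e1 Y) e1 - gm (R1 a b c d X e2 Y) e2 + gm (R1 a b c d X e3 Y) e3"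

definition srho1 :: "real \<Rightarrow> real \<Rightarrow> real \<Rightarrow> real \<Rightarrow> real^3 \<Rightarrow> real^3 \<Rightarrow> real" where
  "srho1 a b c d X Y = (1/2) * (rho1 a b c d X Y + rho1 a b c d Y X)"

text \<open>Ricci operator: the unique endomorphism with srho1(X,Y) = g(Ric X, Y).\<close>
definition Ric1 :: "real \<Rightarrow> real \<Rightarrow> real \<Rightarrow> real \<Rightarrow> real^3 \<Rightarrow> real^3" where
  "Ric1 a b c d X = vector [srho1 a b c d X e1, srho1 a b c d X e2, - srho1 a b c d X e3]"

definition scal1 :: "real \<Rightarrow> real \<Rightarrow> real \<Rightarrow> real \<Rightarrow> real" where
  "scal1 a b c d = srho1 a b c d e1 e1 + srho1 a b c d e2 e2 - srho1 a b c d e3 e3"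

definition is_derivation :: "real \<Rightarrow> real \<Rightarrow> real \<Rightarrow> real \<Rightarrow> (real^3 \<Rightarrow> real^3) \<Rightarrow> bool" where
  "is_derivation a b c d D \<longleftrightarrow> linear D \<and>
     (\<forall>X Y. D (lb a b c d X Y) = lb a b c d (D X) Y + lb a b c d X (D Y))"

end

theory Submission
  imports Defs
begin

text \<open>The Kobayashi-Nomizu connection of \<open>g\<^sub>6\<close> has only three nonzero components, and the
  resulting Ricci operator is diagonal, \<open>diag(-\<beta>\<gamma> - \<alpha>\<^sup>2, -\<alpha>\<^sup>2, 0)\<close>, with \<open>s\<^sup>1 = -\<beta>\<gamma> - 2\<alpha>\<^sup>2\<close>.
  The soliton equation determines \<open>D = Ric\<^sup>1 - k Id\<close> with \<open>k = s\<^sup>1\<lambda>\<^sub>0 + c\<close>, again diagonal, and a diagonal map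
  \<open>diag(p, q, r)\<close> is a derivation of \<open>g\<^sub>6\<close> exactly when \<open>\<alpha>p = \<delta>p = 0\<close>, \<open>\<beta>(p + q - r) = 0\<close> and
  \<open>\<gamma>(p + r - q) = 0\<close>. Since \<open>\<alpha> + \<delta> \<noteq> 0\<close> this forces \<open>p = 0\<close>, and the constraint
  \<open>\<alpha>\<gamma> = \<beta>\<delta>\<close> leaves exactly the two families of the theorem.\<close>

lemma vec3_eq_iff: "(X::real^3) = Y \<longleftrightarrow> X$1 = Y$1 \<and> X$2 = Y$2 \<and> X$3 = Y$3"
  by (simp add: vec_eq_iff forall_3)

lemma basis_components [simp]:
  "e1$1 = 1" "e1$2 = 0" "e1$3 = 0"
  "e2$1 = 0" "e2$2 = 1" "e2$3 = 0"
  "e3$1 = 0" "e3$2 = 0" "e3$3 = 1"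
  by (simp_all add: e1_def e2_def e3_def)

lemma lb_components [simp]:
  "lb \<alpha> \<beta> \<gamma> \<delta> X Y $ 1 = 0"
  "lb \<alpha> \<beta> \<gamma> \<delta> X Y $ 2 = (X$1 * Y$2 - X$2 * Y$1) * \<alpha> + (X$1 * Y$3 - X$3 * Y$1) * \<gamma>"
  "lb \<alpha> \<beta> \<gamma> \<delta> X Y $ 3 = (X$1 * Y$2 - X$2 * Y$1) * \<beta> + (X$1 * Y$3 - X$3 * Y$1) * \<delta>"
  by (simp_all add: lb_def)

lemma Jp_components [simp]: "Jp X $ 1 = X$1" "Jp X $ 2 = X$2" "Jp X $ 3 = - X$3"
  by (simp_all add: Jp_def)

lemma nabla1_eq:
  "nabla1 \<alpha> \<beta> \<gamma> \<delta> X Y =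
     vector [\<alpha> * X$2 * Y$2, - \<gamma> * X$3 * Y$1 - \<alpha> * X$2 * Y$1, \<delta> * X$1 * Y$3]"
  by (simp add: vec3_eq_iff nabla1_def nabla0_def nablaJ_def LC_def koszul_def gm_def
      algebra_simps)

lemma R1_components [simp]:
  "R1 \<alpha> \<beta> \<gamma> \<delta> X Y Z $ i =
     nabla1 \<alpha> \<beta> \<gamma> \<delta> X (nabla1 \<alpha> \<beta> \<gamma> \<delta> Y Z) $ i - nabla1 \<alpha> \<beta> \<gamma> \<delta> Y (nabla1 \<alpha> \<beta> \<gamma> \<delta> X Z) $ i
     - nabla1 \<alpha> \<beta> \<gamma> \<delta> (lb \<alpha> \<beta> \<gamma> \<delta> X Y) Z $ i"
  by (simp add: R1_def)

definition diag3 :: "real \<Rightarrow> real \<Rightarrow> real \<Rightarrow> real^3 \<Rightarrow> real^3" where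
  "diag3 p q r X = vector [p * X$1, q * X$2, r * X$3]"

lemma diag3_components [simp]:
  "diag3 p q r X $ 1 = p * X$1" "diag3 p q r X $ 2 = q * X$2" "diag3 p q r X $ 3 = r * X$3"
  by (simp_all add: diag3_def)

lemma Ric1_eq: "Ric1 \<alpha> \<beta> \<gamma> \<delta> = diag3 (- \<beta> * \<gamma> - \<alpha>\<^sup>2) (- \<alpha>\<^sup>2) 0"
  by (simp add: fun_eq_iff vec3_eq_iff Ric1_def srho1_def rho1_def gm_def nabla1_eq
      power2_eq_square field_simps)

lemma scal1_eq: "scal1 \<alpha> \<beta> \<gamma> \<delta> = - \<beta> * \<gamma> - 2 * \<alpha>\<^sup>2"
  by (simp add: scal1_def srho1_def rho1_def gm_def nabla1_eq power2_eq_square field_simps)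

lemma linear_diag3: "linear (diag3 p q r)"
  by (rule linearI) (simp_all add: vec3_eq_iff algebra_simps)

lemma is_derivation_diag3_iff:
  "is_derivation \<alpha> \<beta> \<gamma> \<delta> (diag3 p q r) \<longleftrightarrow>
     \<alpha> * p = 0 \<and> \<beta> * (p + q - r) = 0 \<and> \<gamma> * (p + r - q) = 0 \<and> \<delta> * p = 0"
proof
  assume "is_derivation \<alpha> \<beta> \<gamma> \<delta> (diag3 p q r)"
  then have "diag3 p q r (lb \<alpha> \<beta> \<gamma> \<delta> X Y) =
      lb \<alpha> \<beta> \<gamma> \<delta> (diag3 p q r X) Y + lb \<alpha> \<beta> \<gamma> \<delta> X (diag3 p q r Y)" for X Y
    by (simp add: is_derivation_def)
  from this[of e1 e2] this[of e1 e3]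
  show "\<alpha> * p = 0 \<and> \<beta> * (p + q - r) = 0 \<and> \<gamma> * (p + r - q) = 0 \<and> \<delta> * p = 0"
    by (simp add: vec3_eq_iff algebra_simps)
next
  assume "\<alpha> * p = 0 \<and> \<beta> * (p + q - r) = 0 \<and> \<gamma> * (p + r - q) = 0 \<and> \<delta> * p = 0"
  then show "is_derivation \<alpha> \<beta> \<gamma> \<delta> (diag3 p q r)"
    unfolding is_derivation_def
    by (simp add: linear_diag3 vec3_eq_iff algebra_simps) algebra
qed

lemma ex_derivation_shift_iff:
  "(\<exists>D. is_derivation \<alpha> \<beta> \<gamma> \<delta> D \<and> R = (\<lambda>X. k *\<^sub>R X + D X)) \<longleftrightarrow>
     is_derivation \<alpha> \<beta> \<gamma> \<delta> (\<lambda>X. R X - k *\<^sub>R X)"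
proof
  assume "\<exists>D. is_derivation \<alpha> \<beta> \<gamma> \<delta> D \<and> R = (\<lambda>X. k *\<^sub>R X + D X)"
  then obtain D where "is_derivation \<alpha> \<beta> \<gamma> \<delta> D" and "R = (\<lambda>X. k *\<^sub>R X + D X)"
    by blast
  moreover from \<open>R = _\<close> have "(\<lambda>X. R X - k *\<^sub>R X) = D"
    by auto
  ultimately show "is_derivation \<alpha> \<beta> \<gamma> \<delta> (\<lambda>X. R X - k *\<^sub>R X)"
    by simp
next
  assume "is_derivation \<alpha> \<beta> \<gamma> \<delta> (\<lambda>X. R X - k *\<^sub>R X)"
  moreover have "R = (\<lambda>X. k *\<^sub>R X + (R X - k *\<^sub>R X))"
    by simp
  ultimately show "\<exists>D. is_derivation \<alpha> \<beta> \<gamma> \<delta> D \<and> R = (\<lambda>X. k *\<^sub>R X + D X)"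
    by blast
qed

lemma Ric1_shift_derivation_iff:
  assumes "\<alpha> + \<delta> \<noteq> 0" and "\<alpha> * \<gamma> - \<beta> * \<delta> = 0"
  shows "is_derivation \<alpha> \<beta> \<gamma> \<delta> (\<lambda>X. Ric1 \<alpha> \<beta> \<gamma> \<delta> X - k *\<^sub>R X) \<longleftrightarrow>
    (\<alpha> = 0 \<and> \<beta> = 0 \<and> \<delta> \<noteq> 0 \<and> k = 0) \<or> (\<alpha> \<noteq> 0 \<and> \<beta> = 0 \<and> \<gamma> = 0 \<and> k = - \<alpha>\<^sup>2)"
    (is "_ \<longleftrightarrow> ?cases")
proof -
  define p where "p = - \<beta> * \<gamma> - \<alpha>\<^sup>2 - k"
  have "(\<lambda>X. Ric1 \<alpha> \<beta> \<gamma> \<delta> X - k *\<^sub>R X) = diag3 p (- \<alpha>\<^sup>2 - k) (- k)"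
    by (simp add: fun_eq_iff vec3_eq_iff Ric1_eq p_def algebra_simps)
  moreover have "(\<alpha> * p = 0 \<and> \<beta> * (p - \<alpha>\<^sup>2) = 0 \<and> \<gamma> * (p + \<alpha>\<^sup>2) = 0 \<and> \<delta> * p = 0) \<longleftrightarrow> ?cases"
  proof
    assume conds: "\<alpha> * p = 0 \<and> \<beta> * (p - \<alpha>\<^sup>2) = 0 \<and> \<gamma> * (p + \<alpha>\<^sup>2) = 0 \<and> \<delta> * p = 0"
    with assms(1) have "p = 0"
      by (metis add_cancel_right_right mult_eq_0_iff)
    show ?cases
    proof (cases "\<alpha> = 0")
      case True
      with assms have "\<delta> \<noteq> 0" and "\<beta> = 0"
        by simp_all
      with True \<open>p = 0\<close> show ?thesis
        by (simp add: p_def)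
    next
      case False
      with conds \<open>p = 0\<close> have "\<beta> = 0" and "\<gamma> = 0"
        by simp_all
      with False \<open>p = 0\<close> show ?thesis
        by (simp add: p_def)
    qed
  next
    assume ?cases
    then show "\<alpha> * p = 0 \<and> \<beta> * (p - \<alpha>\<^sup>2) = 0 \<and> \<gamma> * (p + \<alpha>\<^sup>2) = 0 \<and> \<delta> * p = 0"
      by (auto simp: p_def)
  qed
  ultimately show ?thesis
    by (simp add: is_derivation_diag3_iff algebra_simps)
qed

theorem theorem4p13:
  fixes \<alpha> \<beta> \<gamma> \<delta> lam0 c :: real
  assumes "\<alpha> + \<delta> \<noteq> 0" and "\<alpha> * \<gamma> - \<beta> * \<delta> = 0"
  shows "(\<exists>D. is_derivation \<alpha> \<beta> \<gamma> \<delta> D \<and>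
            Ric1 \<alpha> \<beta> \<gamma> \<delta> = (\<lambda>X. (scal1 \<alpha> \<beta> \<gamma> \<delta> * lam0 + c) *\<^sub>R X + D X))
         \<longleftrightarrow> ((\<alpha> = 0 \<and> \<beta> = 0 \<and> \<delta> \<noteq> 0 \<and> c = 0) \<or>
              (\<alpha> \<noteq> 0 \<and> \<beta> = 0 \<and> \<gamma> = 0 \<and> \<alpha> + \<delta> \<noteq> 0 \<and> c = - (\<alpha> * \<alpha>) + 2 * (\<alpha> * \<alpha>) * lam0))"
  unfolding ex_derivation_shift_iff Ric1_shift_derivation_iff[OF assms] scal1_eq
  using assms(1) by (cases "\<beta> = 0") (auto simp: power2_eq_square)

end
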